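(* Let $n\ge 2$ and let $R$ be the complex Leibniz algebra with basis $\{h,e_1,\dots,e_n\}$ and nonzero products $[e_i,e_1]=e_{i+1}$ ($1\le i\le n-1$), $[h,e_1]=-e_1$, $[e_i,h]=ie_i$ ($1\le i\le n$). Then every biderivation of $R$ is inner, i.e. of the form $(-\mathrm{ad}_x,\mathrm{Ad}_x)$ for some $x\in R$.
   Context: Leibniz algebras are right Leibniz over $\mathbb C$: $[x,[y,z]]=[[x,y],z]-[[x,z],y]$. Unlisted products are zero. A derivation is a linear $d$ with $d([x,y])=[d(x),y]+[x,d(y)]$; an anti-derivation is a linear $D$ with $D([x,y])=[D(x),y]-[D(y),x]$; a biderivation is a pair $(d,D)$ of a derivation and an anti-derivation with $[x,d(y)]=[x,D(y)]$ for all $x,y$. For $x\in R$, $\mathrm{ad}_x(y)=[y,x]$ and $\mathrm{Ad}_x(y)=[x,y]$; the biderivation $(-\mathrm{ad}_x,\mathrm{Ad}_x)$ is called inner. *)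

theory Defs
  imports Complex_Main
begin

text \<open>Elements of R are coordinate vectors x :: nat => complex supported on {0..n};
 coordinate 0 is the coefficient of h, coordinate i (1 <= i <= n) that of e_i.\<close>

definition carrierR :: "nat \<Rightarrow> (nat \<Rightarrow> complex) set" where
  "carrierR n = {x. \<forall>k>n. x k = 0}"

definition unitv :: "nat \<Rightarrow> nat \<Rightarrow> complex" where
  "unitv i = (\<lambda>k. if k = i then 1 else 0)"

definition vadd :: "(nat \<Rightarrow> complex) \<Rightarrow> (nat \<Rightarrow> complex) \<Rightarrow> nat \<Rightarrow> complex" where
  "vadd x y = (\<lambda>k. x k + y k)"

definition vscale :: "complex \<Rightarrow> (nat \<Rightarrow> complex) \<Rightarrow> nat \<Rightarrow> complex" where
  "vscale c x = (\<lambda>k. c * x k)"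

definition basis_prod :: "nat \<Rightarrow> nat \<Rightarrow> nat \<Rightarrow> nat \<Rightarrow> complex" where
  "basis_prod n i j =
    (if 1 \<le> i \<and> i \<le> n - 1 \<and> j = 1 then unitv (i + 1)
     else if i = 0 \<and> j = 1 then vscale (-1) (unitv 1)
     else if 1 \<le> i \<and> i \<le> n \<and> j = 0 then vscale (of_nat i) (unitv i)
     else (\<lambda>_. 0))"

definition brR :: "nat \<Rightarrow> (nat \<Rightarrow> complex) \<Rightarrow> (nat \<Rightarrow> complex) \<Rightarrow> nat \<Rightarrow> complex" where
  "brR n x y = (\<lambda>k. \<Sum>i\<in>{0..n}. \<Sum>j\<in>{0..n}. x i * y j * basis_prod n i j k)"

definition linear_onR :: "nat \<Rightarrow> ((nat \<Rightarrow> complex) \<Rightarrow> nat \<Rightarrow> complex) \<Rightarrow> bool" where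
  "linear_onR n f \<longleftrightarrow>
     (\<forall>x\<in>carrierR n. f x \<in> carrierR n) \<and>
     (\<forall>x\<in>carrierR n. \<forall>y\<in>carrierR n. f (vadd x y) = vadd (f x) (f y)) \<and>
     (\<forall>c. \<forall>x\<in>carrierR n. f (vscale c x) = vscale c (f x))"

definition is_derivation :: "nat \<Rightarrow> ((nat \<Rightarrow> complex) \<Rightarrow> nat \<Rightarrow> complex) \<Rightarrow> bool" where
  "is_derivation n d \<longleftrightarrow> linear_onR n d \<and>
     (\<forall>x\<in>carrierR n. \<forall>y\<in>carrierR n. d (brR n x y) = vadd (brR n (d x) y) (brR n x (d y)))"

definition is_antiderivation :: "nat \<Rightarrow> ((nat \<Rightarrow> complex) \<Rightarrow> nat \<Rightarrow> complex) \<Rightarrow> bool" where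
  "is_antiderivation n D \<longleftrightarrow> linear_onR n D \<and>
     (\<forall>x\<in>carrierR n. \<forall>y\<in>carrierR n.
        D (brR n x y) = vadd (brR n (D x) y) (vscale (-1) (brR n (D y) x)))"

definition is_biderivation :: "nat \<Rightarrow> ((nat \<Rightarrow> complex) \<Rightarrow> nat \<Rightarrow> complex) \<Rightarrow>
    ((nat \<Rightarrow> complex) \<Rightarrow> nat \<Rightarrow> complex) \<Rightarrow> bool" where
  "is_biderivation n d D \<longleftrightarrow> is_derivation n d \<and> is_antiderivation n D \<and>
     (\<forall>x\<in>carrierR n. \<forall>y\<in>carrierR n. brR n x (d y) = brR n x (D y))"

text \<open>ad_x(y) = [y,x], Ad_x(y) = [x,y]; inner biderivation (-ad_x, Ad_x).\<close>
definition is_inner_biderivation :: "nat \<Rightarrow> ((nat \<Rightarrow> complex) \<Rightarrow> nat \<Rightarrow> complex) \<Rightarrow>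
    ((nat \<Rightarrow> complex) \<Rightarrow> nat \<Rightarrow> complex) \<Rightarrow> bool" where
  "is_inner_biderivation n d D \<longleftrightarrow>
     (\<exists>x\<in>carrierR n. \<forall>y\<in>carrierR n.
        d y = vscale (-1) (brR n y x) \<and> D y = brR n x y)"

end

theory Submission
  imports Defs
begin

(* Applying a derivation d to the defining relations [h,h] = 0, [h,e1] = -e1 and
   [e_i,e1] = e_(i+1) forces d(h) = a e1 and d(e_i) = i c e_i - a e_(i+1).  Applying an
   antiderivation D to the same relations forces D(h) to have no h-component,
   (k-1) D(e1)_k = D(h)_(k-1), and D(e_i) = 0 for i >= 2.  Since [h,z] has e1-coordinate -z_1,
   the biderivation condition gives D(y)_1 = d(y)_1, in particular D(h)_1 = a and D(e1)_1 = c.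
   Then x = -c h + sum_k (D(h)_k / k) e_k satisfies d = -ad_x and D = Ad_x on the basis,
   hence everywhere by linearity. *)

lemma unitv_apply: "unitv i k = (if k = i then 1 else 0)"
  by (simp add: unitv_def)

lemma brR_apply:
  assumes "1 \<le> n"
  shows "brR n x y k = (if k = 1 then x 1 * y 0 - x 0 * y 1
     else if 2 \<le> k \<and> k \<le> n then x (k - 1) * y 1 + of_nat k * x k * y 0 else 0)"
proof -
  have "(\<Sum>j\<in>{0..n}. x i * y j * basis_prod n i j k) =
      (\<Sum>j\<in>{0, 1}. x i * y j * basis_prod n i j k)" for i
    using assms by (intro sum.mono_neutral_right) (auto simp: basis_prod_def)
  then have "brR n x y k = (\<Sum>i\<in>{0..n}. x i * y 0 * basis_prod n i 0 k)
      + (\<Sum>i\<in>{0..n}. x i * y 1 * basis_prod n i 1 k)"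
    by (simp add: brR_def sum.distrib)
  also have "(\<Sum>i\<in>{0..n}. x i * y 0 * basis_prod n i 0 k) =
      (\<Sum>i\<in>{0..n}. if i = k then (if 1 \<le> k \<and> k \<le> n then of_nat k * x k * y 0 else 0) else 0)"
    by (intro sum.cong) (auto simp: basis_prod_def unitv_def vscale_def)
  also have "(\<Sum>i\<in>{0..n}. x i * y 1 * basis_prod n i 1 k) = (\<Sum>i\<in>{0..n}.
      (if i = 0 then (if k = 1 then - x 0 * y 1 else 0) else 0)
    + (if i = k - 1 then (if 2 \<le> k \<and> k \<le> n then x (k - 1) * y 1 else 0) else 0))"
    by (intro sum.cong) (auto simp: basis_prod_def unitv_def vscale_def)
  finally show ?thesis
    using assms by (auto simp: sum.distrib)
qed

lemma brR_unitv:
  assumes "i \<le> n" "j \<le> n"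
  shows "brR n (unitv i) (unitv j) = basis_prod n i j"
  using assms
  by (simp add: brR_def unitv_def sum.If_cases if_distrib[where f="\<lambda>c. c * _"] cong: if_cong)

lemma brR_in_carrierR: "1 \<le> n \<Longrightarrow> brR n x y \<in> carrierR n"
  by (simp add: carrierR_def brR_apply)

lemma unitv_in_carrierR: "i \<le> n \<Longrightarrow> unitv i \<in> carrierR n"
  by (simp add: carrierR_def unitv_def)

lemma linear_onR_zero:
  assumes "linear_onR n f"
  shows "f (\<lambda>_. 0) = (\<lambda>_. 0)"
proof -
  have "(\<lambda>_. 0) \<in> carrierR n" by (simp add: carrierR_def)
  then have "f (vscale 0 (\<lambda>_. 0)) = vscale 0 (f (\<lambda>_. 0))"
    using assms by (simp add: linear_onR_def)
  then show ?thesis by (simp add: vscale_def)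
qed

lemma linear_onR_expand:
  assumes f: "linear_onR n f" and y: "y \<in> carrierR n"
  shows "f y k = (\<Sum>i\<in>{0..n}. y i * f (unitv i) k)"
proof -
  define trunc where "trunc m = (\<lambda>k. if k \<le> m then y k else 0)" for m
  have add: "\<And>a b. a \<in> carrierR n \<Longrightarrow> b \<in> carrierR n \<Longrightarrow> f (vadd a b) = vadd (f a) (f b)"
    and scale: "\<And>c a. a \<in> carrierR n \<Longrightarrow> f (vscale c a) = vscale c (f a)"
    using f by (auto simp: linear_onR_def)
  have "f (trunc m) k = (\<Sum>i\<in>{0..m}. y i * f (unitv i) k)" if "m \<le> n" for m
    using that
  proof (induction m)
    case 0
    have "trunc 0 = vscale (y 0) (unitv 0)"
      by (auto simp: trunc_def vscale_def unitv_def)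
    then show ?case
      using scale[OF unitv_in_carrierR[of 0 n]] by (simp add: vscale_def)
  next
    case (Suc m)
    have "trunc (Suc m) = vadd (trunc m) (vscale (y (Suc m)) (unitv (Suc m)))"
      by (auto simp: trunc_def vadd_def vscale_def unitv_def le_Suc_eq)
    moreover have "trunc m \<in> carrierR n" "vscale (y (Suc m)) (unitv (Suc m)) \<in> carrierR n"
      using Suc.prems by (auto simp: trunc_def carrierR_def vscale_def unitv_def)
    ultimately show ?case
      using Suc add scale[OF unitv_in_carrierR[OF Suc.prems]] by (simp add: vadd_def vscale_def)
  qed
  moreover have "trunc n = y"
    using y by (auto simp: trunc_def carrierR_def)
  ultimately show ?thesis by blast
qed

lemma linear_onR_unitv_vanishes:
  assumes "linear_onR n f" "i \<le> n" "n < k"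
  shows "f (unitv i) k = 0"
  using assms unitv_in_carrierR[of i n] by (simp add: linear_onR_def carrierR_def)

lemma linear_onR_eqI:
  assumes "linear_onR n f" "linear_onR n g" "\<And>i. i \<le> n \<Longrightarrow> f (unitv i) = g (unitv i)"
    and "y \<in> carrierR n"
  shows "f y = g y"
  using assms by (auto simp: linear_onR_expand)

lemma linear_onR_brR_left: "1 \<le> n \<Longrightarrow> linear_onR n (brR n x)"
  by (auto simp: linear_onR_def brR_in_carrierR brR_apply vadd_def vscale_def algebra_simps)

lemma linear_onR_brR_right: "1 \<le> n \<Longrightarrow> linear_onR n (\<lambda>y. brR n y x)"
  by (auto simp: linear_onR_def brR_in_carrierR brR_apply vadd_def vscale_def algebra_simps)

lemma linear_onR_vscale: "linear_onR n f \<Longrightarrow> linear_onR n (\<lambda>y. vscale c (f y))"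
  by (auto simp: linear_onR_def carrierR_def vadd_def vscale_def algebra_simps)

lemma is_derivation_linear_onR: "is_derivation n d \<Longrightarrow> linear_onR n d"
  by (simp add: is_derivation_def)

lemma is_antiderivation_linear_onR: "is_antiderivation n D \<Longrightarrow> linear_onR n D"
  by (simp add: is_antiderivation_def)

lemma derivation_basis_prod:
  assumes "is_derivation n d" "i \<le> n" "j \<le> n"
  shows "d (basis_prod n i j) =
    vadd (brR n (d (unitv i)) (unitv j)) (brR n (unitv i) (d (unitv j)))"
  using assms by (metis brR_unitv is_derivation_def unitv_in_carrierR)

lemma derivation_bracket_h_h:
  assumes "1 \<le> n" "is_derivation n d" "2 \<le> k" "k \<le> n"
  shows "d (unitv 0) k = 0"
proof -
  have "brR n (d (unitv 0)) (unitv 0) k + brR n (unitv 0) (d (unitv 0)) k = 0"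
    using fun_cong[OF derivation_basis_prod[OF assms(2), of 0 0], of k]
    by (simp add: basis_prod_def vadd_def linear_onR_zero[OF is_derivation_linear_onR[OF assms(2)]])
  then show ?thesis
    using assms by (simp add: brR_apply unitv_apply)
qed

lemma derivation_bracket_h_e1:
  assumes n: "1 \<le> n" and d: "is_derivation n d"
  shows "d (unitv 0) 0 = 0" and "d (unitv 1) 0 = 0"
    and "2 \<le> k \<Longrightarrow> k \<le> n \<Longrightarrow> d (unitv 1) k = - d (unitv 0) (k - 1)"
proof -
  have "d (vscale (-1) (unitv 1)) = vscale (-1) (d (unitv 1))"
    using is_derivation_linear_onR[OF d] n by (simp add: linear_onR_def unitv_in_carrierR)
  then have rel:
      "brR n (d (unitv 0)) (unitv 1) k + brR n (unitv 0) (d (unitv 1)) k + d (unitv 1) k = 0" for k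
    using fun_cong[OF derivation_basis_prod[OF d, of 0 1], of k] n
    by (simp add: basis_prod_def vadd_def vscale_def neg_eq_iff_add_eq_0 add.commute)
  show "d (unitv 0) 0 = 0"
    using rel[of 1] n by (simp add: brR_apply unitv_apply)
  show "d (unitv 1) 0 = 0"
    using rel[of 0] n by (simp add: brR_apply unitv_apply)
  show "d (unitv 1) k = - d (unitv 0) (k - 1)" if "2 \<le> k" "k \<le> n"
    using rel[of k] that by (simp add: brR_apply unitv_apply add_eq_0_iff)
qed

lemma derivation_unitv_0:
  assumes n: "1 \<le> n" and d: "is_derivation n d"
  shows "d (unitv 0) k = (if k = 1 then d (unitv 0) 1 else 0)"
proof -
  consider "k = 0" | "k = 1" | "2 \<le> k" "k \<le> n" | "n < k"
    by linarith
  then show ?thesis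
    using derivation_bracket_h_e1(1)[OF n d] derivation_bracket_h_h[OF n d, of k]
      linear_onR_unitv_vanishes[OF is_derivation_linear_onR[OF d], of 0 k]
    by cases auto
qed

lemma derivation_unitv:
  assumes n: "1 \<le> n" and d: "is_derivation n d" and i: "1 \<le> i" "i \<le> n"
  shows "d (unitv i) k = (if k = i then of_nat i * d (unitv 1) 1
    else if k = i + 1 \<and> i < n then - d (unitv 0) 1 else 0)"
  using i
proof (induction i arbitrary: k rule: nat_induct_at_least)
  case base
  consider "k = 0" | "k = 1" | "k = 2" "k \<le> n" | "3 \<le> k" "k \<le> n" | "n < k"
    by linarith
  then show ?case
    using derivation_bracket_h_e1[OF n d] derivation_bracket_h_h[OF n d, of "k - 1"]
      linear_onR_unitv_vanishes[OF is_derivation_linear_onR[OF d], of 1 k] n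
    by cases auto
next
  case (Suc i)
  have "basis_prod n i 1 = unitv (Suc i)"
    using Suc.hyps Suc.prems by (auto simp: basis_prod_def unitv_def)
  then have step:
      "d (unitv (Suc i)) k = brR n (d (unitv i)) (unitv 1) k + brR n (unitv i) (d (unitv 1)) k" for k
    using derivation_basis_prod[OF d, of i 1] Suc.prems n by (simp add: vadd_def)
  have IH: "d (unitv i) j = (if j = i then of_nat i * d (unitv 1) 1
      else if j = i + 1 \<and> i < n then - d (unitv 0) 1 else 0)" for j
    using Suc.IH Suc.prems by simp
  consider "k = 0" | "k = 1" | "2 \<le> k" "k \<le> n" | "n < k"
    by linarith
  then show ?case
  proof cases
    case 1
    then show ?thesis
      unfolding step using n by (simp add: brR_apply)
  next
    case 2
    then show ?thesis
      unfolding step using n IH[of 0] Suc.hyps derivation_bracket_h_e1(2)[OF n d]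
      by (simp add: brR_apply unitv_apply)
  next
    case 3
    then show ?thesis
      unfolding step using n IH[of "k - 1"] Suc.hyps derivation_bracket_h_e1(2)[OF n d]
      by (auto simp: brR_apply unitv_apply algebra_simps)
  next
    case 4
    then show ?thesis
      using linear_onR_unitv_vanishes[OF is_derivation_linear_onR[OF d], of "Suc i" k] Suc.prems
      by auto
  qed
qed

lemma antiderivation_basis_prod:
  assumes "is_antiderivation n D" "i \<le> n" "j \<le> n"
  shows "D (basis_prod n i j) =
    vadd (brR n (D (unitv i)) (unitv j)) (vscale (-1) (brR n (D (unitv j)) (unitv i)))"
  using assms by (metis brR_unitv is_antiderivation_def unitv_in_carrierR)

lemma antiderivation_bracket_h_e1:
  assumes n: "1 \<le> n" and D: "is_antiderivation n D"
  shows "D (unitv 0) 0 = 0" and "D (unitv 1) 0 = 0"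
    and "2 \<le> k \<Longrightarrow> k \<le> n \<Longrightarrow> of_nat (k - 1) * D (unitv 1) k = D (unitv 0) (k - 1)"
proof -
  have "D (vscale (-1) (unitv 1)) = vscale (-1) (D (unitv 1))"
    using is_antiderivation_linear_onR[OF D] n by (simp add: linear_onR_def unitv_in_carrierR)
  then have rel:
      "brR n (D (unitv 0)) (unitv 1) k - brR n (D (unitv 1)) (unitv 0) k + D (unitv 1) k = 0" for k
    using fun_cong[OF antiderivation_basis_prod[OF D, of 0 1], of k] n
    by (simp add: basis_prod_def vadd_def vscale_def neg_eq_iff_add_eq_0 add.commute)
  show "D (unitv 0) 0 = 0"
    using rel[of 1] n by (simp add: brR_apply unitv_apply)
  show "D (unitv 1) 0 = 0"
    using rel[of 0] n by (simp add: brR_apply unitv_apply)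
  show "of_nat (k - 1) * D (unitv 1) k = D (unitv 0) (k - 1)" if "2 \<le> k" "k \<le> n"
    using rel[of k] that by (simp add: brR_apply unitv_apply of_nat_diff algebra_simps)
qed

lemma antiderivation_unitv_ge_2:
  assumes n: "1 \<le> n" and D: "is_antiderivation n D" and i: "2 \<le> i" "i \<le> n"
  shows "D (unitv i) k = 0"
  using i
proof (induction i arbitrary: k rule: nat_induct_at_least)
  case base
  have "basis_prod n 1 1 = unitv 2"
    using base by (auto simp: basis_prod_def unitv_def)
  then have "D (unitv 2) k = brR n (D (unitv 1)) (unitv 1) k - brR n (D (unitv 1)) (unitv 1) k" for k
    using antiderivation_basis_prod[OF D, of 1 1] base by (simp add: vadd_def vscale_def)
  then show ?case
    by simp
next
  case (Suc i)
  have "basis_prod n i 1 = unitv (Suc i)"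
    using Suc.hyps Suc.prems by (auto simp: basis_prod_def unitv_def)
  then have step:
      "D (unitv (Suc i)) k = brR n (D (unitv i)) (unitv 1) k - brR n (D (unitv 1)) (unitv i) k" for k
    using antiderivation_basis_prod[OF D, of i 1] Suc.prems n by (simp add: vadd_def vscale_def)
  have IH: "D (unitv i) j = 0" for j
    using Suc.IH Suc.prems by simp
  show ?case
    unfolding step using Suc.hyps n by (simp add: brR_apply unitv_apply IH)
qed

lemma biderivation_coord_1:
  assumes "is_biderivation n d D" "1 \<le> n" "y \<in> carrierR n"
  shows "D y 1 = d y 1"
proof -
  have "brR n (unitv 0) (d y) 1 = brR n (unitv 0) (D y) 1"
    using assms by (simp add: is_biderivation_def unitv_in_carrierR)
  then show ?thesis
    using assms(2) by (simp add: brR_apply unitv_apply)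
qed

(* The h-coordinate is read off from d(e1) = -[e1,x], the e_k-coordinates from
   D(h) = [x,h] = sum_k k x_k e_k. *)
definition inner_witness ::
    "nat \<Rightarrow> ((nat \<Rightarrow> complex) \<Rightarrow> nat \<Rightarrow> complex) \<Rightarrow>
      ((nat \<Rightarrow> complex) \<Rightarrow> nat \<Rightarrow> complex) \<Rightarrow> nat \<Rightarrow> complex" where
  "inner_witness n d D =
     (\<lambda>k. if k = 0 then - d (unitv 1) 1 else if k \<le> n then D (unitv 0) k / of_nat k else 0)"

lemma inner_witness_in_carrierR: "inner_witness n d D \<in> carrierR n"
  by (simp add: inner_witness_def carrierR_def)

lemma biderivation_unitv_eq_neg_ad:
  assumes n: "1 \<le> n" and bi: "is_biderivation n d D" and i: "i \<le> n"
  shows "d (unitv i) = vscale (-1) (brR n (unitv i) (inner_witness n d D))"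
proof
  fix k
  have d: "is_derivation n d"
    using bi by (simp add: is_biderivation_def)
  define a c where "a = d (unitv 0) 1" and "c = d (unitv 1) 1"
  have x: "inner_witness n d D 0 = - c" "inner_witness n d D 1 = a"
    using biderivation_coord_1[OF bi n unitv_in_carrierR[of 0 n]] n
    by (simp_all add: inner_witness_def a_def c_def)
  show "d (unitv i) k = vscale (-1) (brR n (unitv i) (inner_witness n d D)) k"
  proof (cases "i = 0")
    case True
    then show ?thesis
      using n x derivation_unitv_0[OF n d, of k, folded a_def]
      by (simp add: brR_apply unitv_apply vscale_def)
  next
    case False
    then show ?thesis
      using n i x derivation_unitv[OF n d, of i k, folded a_def c_def]
      by (auto simp: brR_apply unitv_apply vscale_def)
  qed
qed

lemma biderivation_unitv_eq_Ad:
  assumes n: "1 \<le> n" and bi: "is_biderivation n d D" and i: "i \<le> n"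
  shows "D (unitv i) = brR n (inner_witness n d D) (unitv i)"
proof
  fix k
  have D: "is_antiderivation n D"
    using bi by (simp add: is_biderivation_def)
  note lin = is_antiderivation_linear_onR[OF D]
  consider "i = 0" | "i = 1" | "2 \<le> i"
    by linarith
  then show "D (unitv i) k = brR n (inner_witness n d D) (unitv i) k"
  proof cases
    case 1
    then show ?thesis
      using n antiderivation_bracket_h_e1(1)[OF n D] linear_onR_unitv_vanishes[OF lin, of 0 k]
      by (cases "k = 0") (auto simp: brR_apply unitv_apply inner_witness_def)
  next
    case 2
    have "D (unitv 1) 1 = d (unitv 1) 1"
      using biderivation_coord_1[OF bi n unitv_in_carrierR[of 1 n]] n .
    moreover have "D (unitv 1) k = D (unitv 0) (k - 1) / of_nat (k - 1)" if "2 \<le> k" "k \<le> n"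
      using antiderivation_bracket_h_e1(3)[OF n D that] that by (simp add: field_simps)
    ultimately show ?thesis
      using 2 n antiderivation_bracket_h_e1(2)[OF n D] linear_onR_unitv_vanishes[OF lin, of 1 k]
      by (cases "k = 0") (auto simp: brR_apply unitv_apply inner_witness_def)
  next
    case 3
    then show ?thesis
      using n i antiderivation_unitv_ge_2[OF n D] by (simp add: brR_apply unitv_apply)
  qed
qed

theorem mainTheorem9:
  fixes n :: nat and d D :: "(nat \<Rightarrow> complex) \<Rightarrow> nat \<Rightarrow> complex"
  assumes "n \<ge> 2"
    and "is_biderivation n d D"
  shows "is_inner_biderivation n d D"
  unfolding is_inner_biderivation_def
proof (intro bexI ballI conjI)
  have n: "1 \<le> n"
    using assms(1) by simp
  have "linear_onR n d" "linear_onR n D"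
    using assms(2)
    by (simp_all add: is_biderivation_def is_derivation_linear_onR is_antiderivation_linear_onR)
  fix y
  assume y: "y \<in> carrierR n"
  show "d y = vscale (-1) (brR n y (inner_witness n d D))"
    by (rule linear_onR_eqI[OF \<open>linear_onR n d\<close> linear_onR_vscale[OF linear_onR_brR_right[OF n]]
          biderivation_unitv_eq_neg_ad[OF n assms(2)] y])
  show "D y = brR n (inner_witness n d D) y"
    by (rule linear_onR_eqI[OF \<open>linear_onR n D\<close> linear_onR_brR_left[OF n]
          biderivation_unitv_eq_Ad[OF n assms(2)] y])
qed (rule inner_witness_in_carrierR)

end
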